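(* Let $p$ be an odd prime, let $F_{X_2}$ be the fusion matrix of the simple object $X_2$ of $\operatorname{PSU}(2)_{p-2}$ (with respect to the ordered basis $X_0,X_2,\dots,X_{p-3}$), and let $T_{X_2}$ be the linear operator on $\frac{p-1}{2}\times\frac{p-1}{2}$ real matrices given by $T_{X_2}(A)=F_{X_2}^{-1}AF_{X_2}$. Then $T_{X_2}$ has no eigenvector with eigenvalue $-1$.
   Context: $\operatorname{PSU}(2)_{p-2}$ is the fusion category with simple objects $X_{2j}$, $0\le j\le\frac{p-3}{2}$, $X_0=\mathbf 1$, and fusion rules $X_{2i}\otimes X_{2j}\cong\bigoplus_m N_{2i,2j}^{2m}X_{2m}$ with $N_{2i,2j}^{2m}=1$ if $|2i-2j|\le2m\le\min\{2i+2j,2(p-2)-2i-2j\}$ and $0$ otherwise. The fusion matrix $F_{X_2}$ has $(m,i)$ entry $N_{2,2i}^{2m}$ (multiplicity of $X_{2m}$ in $X_2\otimes X_{2i}$); it is the symmetric tridiagonal matrix with $0$ in position $(1,1)$, $1$ on the rest of the diagonal, and $1$ on the sub- and super-diagonals, and it is invertible. *)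

theory Defs
  imports "Jordan_Normal_Form.Matrix" "HOL-Computational_Algebra.Primes"
begin

text \<open>Fusion coefficients of PSU(2)_{p-2}: psu_N p i j m is the multiplicity
  N_{2i,2j}^{2m} of X_{2m} in X_{2i} (x) X_{2j}; indices i,j,m range over 0..(p-3)/2.
  N = 1 iff |2i-2j| <= 2m <= min(2i+2j, 2(p-2)-2i-2j).\<close>
definition psu_N :: "nat \<Rightarrow> nat \<Rightarrow> nat \<Rightarrow> nat \<Rightarrow> nat" where
  "psu_N p i j m =
     (if \<bar>2 * int i - 2 * int j\<bar> \<le> 2 * int m \<and>
         2 * int m \<le> min (2 * int i + 2 * int j) (2 * (int p - 2) - 2 * int i - 2 * int j)
      then 1 else 0)"

definition psu_rank :: "nat \<Rightarrow> nat" where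
  "psu_rank p = (p - 1) div 2"

definition fusion_matrix_X2 :: "nat \<Rightarrow> real mat" where
  "fusion_matrix_X2 p = mat (psu_rank p) (psu_rank p) (\<lambda>(m, i). real (psu_N p 1 i m))"

definition sq_mat_inv :: "real mat \<Rightarrow> real mat" where
  "sq_mat_inv F = (THE B. B \<in> carrier_mat (dim_row F) (dim_row F) \<and> inverts_mat F B \<and> inverts_mat B F)"

definition T_X2 :: "nat \<Rightarrow> real mat \<Rightarrow> real mat" where
  "T_X2 p A = sq_mat_inv (fusion_matrix_X2 p) * A * fusion_matrix_X2 p"

end

theory Submission
  imports Defs "Jordan_Normal_Form.Determinant" "HOL-Number_Theory.Cong"
begin

(* If F^-1 A F = -A then A F = -F A, so A F^p = -F^p A as p is odd. On odd integer sequences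
   of period 2p, F acts on the values at the odd sites 1, 3, ..., p - 2 as
   g(k) |-> g(k - 2) + g(k) + g(k + 2), that is, as the polynomial x^(2p-2) + x^(2p) + x^(2p+2)
   in the shift x. By the Frobenius congruence its p-th power is x^(2p(p-1)) + x^(2p^2) +
   x^(2p(p+1)) modulo p, which acts as 3; hence the integer matrix F^p is congruent to 3I
   modulo p. The map X |-> X F^p + F^p X is then represented by an integer matrix congruent to
   6I modulo p, whose determinant is a power of 6 modulo p and so nonzero for p >= 5; therefore
   A = 0. For p = 3, F = 0 and T vanishes. *)

section \<open>Integer matrices congruent to a scalar matrix\<close>

definition cong_scalar_mat :: "int \<Rightarrow> int mat \<Rightarrow> int \<Rightarrow> bool" where
  "cong_scalar_mat q M d \<longleftrightarrow>
     (\<forall>a < dim_row M. \<forall>b < dim_col M. [M $$ (a, b) = (if a = b then d else 0)] (mod q))"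

lemma det_cong_scalar_mat:
  assumes M: "M \<in> carrier_mat n n" and cong: "cong_scalar_mat q M d"
  shows "[det M = d ^ n] (mod q)"
proof -
  let ?P = "{s. s permutes {0..<n}}"
  have entry: "[M $$ (a, b) = (if a = b then d else 0)] (mod q)" if "a < n" "b < n" for a b
    using M cong that by (auto simp: cong_scalar_mat_def)
  have term_cong: "[signof s * (\<Prod>i = 0..<n. M $$ (i, s i)) = (if s = id then d ^ n else 0)] (mod q)"
    if s: "s \<in> ?P" for s
  proof (cases "s = id")
    case True
    have "[(\<Prod>i = 0..<n. M $$ (i, i)) = (\<Prod>i = 0..<n. d)] (mod q)"
      by (rule cong_prod) (use entry in force)
    then show ?thesis using True by (simp add: sign_id)
  next
    case False
    then obtain i where i: "s i \<noteq> i" by (metis eq_id_iff)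
    have "i < n" using i permutes_not_in[of s "{0..<n}" i] s by fastforce
    moreover have "s i < n" using permutes_in_image[of s "{0..<n}" i] s \<open>i < n\<close> by simp
    ultimately have "q dvd M $$ (i, s i)"
      using entry[of i "s i"] i by (simp add: cong_0_iff)
    then have "q dvd (\<Prod>i = 0..<n. M $$ (i, s i))"
      using \<open>i < n\<close>
      by (meson atLeastLessThan_iff dvd_prodI dvd_trans finite_atLeastLessThan zero_le)
    then show ?thesis using False by (simp add: cong_0_iff)
  qed
  have "[det M = (\<Sum>s\<in>?P. if s = id then d ^ n else 0)] (mod q)"
    unfolding det_def'[OF M] by (rule cong_sum) (use term_cong in blast)
  also have "(\<Sum>s\<in>?P. if s = id then d ^ n else 0) = d ^ n"
    by (simp add: sum.delta' finite_permutations permutes_id)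
  finally show ?thesis .
qed

lemma det_nonzero_if_cong_scalar_mat:
  assumes "M \<in> carrier_mat n n" "cong_scalar_mat q M d" "prime q" "\<not> q dvd d"
  shows "det M \<noteq> 0"
proof
  assume "det M = 0"
  then have "q dvd d ^ n"
    using det_cong_scalar_mat[OF assms(1,2)] by (metis cong_0_iff cong_sym)
  then show False using assms(3,4) prime_dvd_power by blast
qed

lemma det_pow_mat:
  assumes "A \<in> carrier_mat n n"
  shows "det (A ^\<^sub>m j) = det A ^ j"
proof (induction j)
  case (Suc j)
  have "A ^\<^sub>m j \<in> carrier_mat n n" using assms by simp
  then show ?case using Suc det_mult[OF _ assms] by (simp add: mult.commute)
qed (use assms in simp)

section \<open>Polynomials acting on integer sequences by shifts\<close>

lemma prime_dvd_add_power_diff: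
  fixes a b :: "'a::comm_ring_1"
  assumes "prime p"
  shows "of_nat p dvd (a + b) ^ p - (a ^ p + b ^ p)"
proof -
  let ?t = "\<lambda>k. of_nat (p choose k) * a ^ k * b ^ (p - k)"
  have p0: "0 < p" using assms prime_gt_0_nat by blast
  have "{..p} = insert 0 (insert p {0<..<p})" using p0 by auto
  then have "(a + b) ^ p = (\<Sum>k\<in>{0<..<p}. ?t k) + (a ^ p + b ^ p)"
    using p0 by (simp add: binomial_ring algebra_simps)
  moreover have "of_nat p dvd (\<Sum>k\<in>{0<..<p}. ?t k)"
  proof (rule dvd_sum)
    fix k assume "k \<in> {0<..<p}"
    then obtain c where "p choose k = p * c" using dvd_choose_prime[of k p] assms by (auto elim: dvdE)
    then show "of_nat p dvd ?t k" by (simp add: mult.assoc)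
  qed
  ultimately show ?thesis by simp
qed

definition shift_act :: "'a::comm_semiring_1 poly \<Rightarrow> (int \<Rightarrow> 'a) \<Rightarrow> int \<Rightarrow> 'a" where
  "shift_act P g k = (\<Sum>i\<le>degree P. coeff P i * g (k + int i))"

lemma shift_act_eq_sum:
  assumes "degree P \<le> N"
  shows "shift_act P g k = (\<Sum>i\<le>N. coeff P i * g (k + int i))"
  unfolding shift_act_def
  by (rule sum.mono_neutral_left) (use assms in \<open>auto simp: coeff_eq_0\<close>)

lemma shift_act_add: "shift_act (P + Q) g k = shift_act P g k + shift_act Q g k"
proof -
  let ?N = "max (degree P) (degree Q)"
  have "degree (P + Q) \<le> ?N" by (rule degree_add_le) auto
  then show ?thesis
    by (simp add: shift_act_eq_sum[of _ ?N] sum.distrib distrib_right)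
qed

lemma shift_act_smult: "shift_act (smult c P) g k = c * shift_act P g k"
proof -
  have "shift_act (smult c P) g k = (\<Sum>i\<le>degree P. coeff (smult c P) i * g (k + int i))"
    by (rule shift_act_eq_sum[OF degree_smult_le])
  then show ?thesis by (simp add: shift_act_def sum_distrib_left mult.assoc)
qed

lemma shift_act_pCons: "shift_act (pCons a P) g k = a * g k + shift_act P g (k + 1)"
proof -
  have "shift_act (pCons a P) g k = (\<Sum>i\<le>Suc (degree P). coeff (pCons a P) i * g (k + int i))"
    by (rule shift_act_eq_sum) (simp add: degree_pCons_le)
  also have "\<dots> = a * g k + (\<Sum>i\<le>degree P. coeff P i * g (k + 1 + int i))"
    by (subst sum.atMost_Suc_shift) (simp add: algebra_simps)
  finally show ?thesis by (simp add: shift_act_def)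
qed

lemma shift_act_mult: "shift_act (P * Q) g = shift_act P (shift_act Q g)"
proof (induction P rule: pCons_induct)
  case (pCons a P)
  then show ?case
    by (auto simp: mult_pCons_left shift_act_add shift_act_smult shift_act_pCons)
qed (simp add: shift_act_def)

lemma shift_act_monom: "shift_act (monom c j) g k = c * g (k + int j)"
proof -
  have "shift_act (monom c j) g k = (\<Sum>i\<le>j. coeff (monom c j) i * g (k + int i))"
    by (rule shift_act_eq_sum) (simp add: degree_monom_le)
  also have "\<dots> = c * g (k + int j)"
    by (subst sum.remove[of _ j]) (auto simp: coeff_monom)
  finally show ?thesis .
qed

lemma shift_act_1: "shift_act 1 g = g"
  by (simp add: shift_act_def fun_eq_iff)

lemma shift_act_dvd_diff:
  fixes P Q :: "'a::comm_ring_1 poly"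
  assumes "[:c:] dvd P - Q"
  shows "c dvd shift_act P g k - shift_act Q g k"
proof -
  obtain R where "P = Q + [:c:] * R" using assms by (metis diff_add_cancel add.commute dvdE)
  then show ?thesis by (simp add: shift_act_add shift_act_smult)
qed

definition periodic :: "int \<Rightarrow> (int \<Rightarrow> 'a) \<Rightarrow> bool" where
  "periodic m g \<longleftrightarrow> (\<forall>k. g (k + m) = g k)"

definition odd_fun :: "(int \<Rightarrow> 'a::ab_group_add) \<Rightarrow> bool" where
  "odd_fun g \<longleftrightarrow> (\<forall>k. g (- k) = - g k)"

lemma periodic_add_mult:
  assumes "periodic m g"
  shows "g (k + m * int t) = g k"
proof (induction t)
  case (Suc t)
  have "g (k + m * int (Suc t)) = g ((k + m * int t) + m)" by (simp add: algebra_simps)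
  then show ?case using Suc assms by (simp add: periodic_def)
qed simp

lemma periodic_shift_act:
  assumes "periodic m g"
  shows "periodic m (shift_act P g)"
proof -
  have "g (k + m + int i) = g (k + int i)" for k i
    using assms unfolding periodic_def by (metis add.commute add.left_commute)
  then show ?thesis by (simp add: periodic_def shift_act_def)
qed

lemma periodic_odd_fun_half_period_eq_0:
  fixes g :: "int \<Rightarrow> int"
  assumes "periodic (2 * m) g" "odd_fun g"
  shows "g m = 0"
proof -
  have "g m = g (- m + 2 * m)" by simp
  also have "\<dots> = g (- m)" using assms(1) unfolding periodic_def by blast
  also have "\<dots> = - g m" using assms(2) unfolding odd_fun_def by blast
  finally show ?thesis by simp
qed

(* On sequences of period 2p this acts as x^-2 + 1 + x^2. *)
definition fusion_poly :: "nat \<Rightarrow> int poly" where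
  "fusion_poly p = monom 1 (2 * p - 2) + monom 1 (2 * p) + monom 1 (2 * p + 2)"

lemma shift_act_fusion_poly:
  assumes "periodic (2 * int p) g" "1 \<le> p"
  shows "shift_act (fusion_poly p) g k = g (k - 2) + g k + g (k + 2)"
proof -
  have "int (2 * p - 2) = 2 * int p - 2" using assms(2) by simp
  then have "shift_act (fusion_poly p) g k
      = g ((k - 2) + 2 * int p) + g (k + 2 * int p) + g ((k + 2) + 2 * int p)"
    by (simp add: fusion_poly_def shift_act_add shift_act_monom algebra_simps)
  then show ?thesis using assms(1) by (simp add: periodic_def)
qed

lemma odd_fun_shift_act_fusion_poly:
  assumes "periodic (2 * int p) g" "odd_fun g" "1 \<le> p"
  shows "odd_fun (shift_act (fusion_poly p) g)"
proof -
  have odd: "g (- k) = - g k" for k using assms(2) unfolding odd_fun_def by blast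
  have "g (- k - 2) + g (- k) + g (- k + 2) = - (g (k - 2) + g k + g (k + 2))" for k
    using odd[of "k + 2"] odd[of k] odd[of "k - 2"] by simp
  then show ?thesis unfolding odd_fun_def shift_act_fusion_poly[OF assms(1,3)] by simp
qed

lemma fusion_poly_power_dvd:
  assumes "prime p"
  shows "[:int p:] dvd fusion_poly p ^ p
    - (monom 1 ((2 * p - 2) * p) + monom 1 (2 * p * p) + monom 1 ((2 * p + 2) * p))"
proof -
  let ?a = "monom (1::int) (2 * p - 2)" and ?b = "monom (1::int) (2 * p)"
    and ?c = "monom (1::int) (2 * p + 2)"
  have "of_nat p dvd ((?a + ?b + ?c) ^ p - ((?a + ?b) ^ p + ?c ^ p))
      + ((?a + ?b) ^ p - (?a ^ p + ?b ^ p))"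
    using prime_dvd_add_power_diff[OF assms] by (intro dvd_add)
  also have "\<dots> = fusion_poly p ^ p - (?a ^ p + ?b ^ p + ?c ^ p)"
    unfolding fusion_poly_def by (simp add: algebra_simps)
  finally show ?thesis by (simp add: of_nat_poly monom_power)
qed

lemma shift_act_fusion_poly_power_cong:
  assumes "prime p" "periodic (2 * int p) g"
  shows "[shift_act (fusion_poly p ^ p) g k = 3 * g k] (mod int p)"
proof -
  let ?Q = "monom 1 ((2 * p - 2) * p) + monom 1 (2 * p * p) + monom (1::int) ((2 * p + 2) * p)"
  have "int p dvd shift_act (fusion_poly p ^ p) g k - shift_act ?Q g k"
    by (rule shift_act_dvd_diff[OF fusion_poly_power_dvd[OF assms(1)]])
  moreover have "shift_act ?Q g k = 3 * g k"
  proof -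
    have "1 \<le> p" using assms(1) prime_gt_0_nat by (simp add: Suc_le_eq)
    then have e: "int ((2 * p - 2) * p) = 2 * int p * int (p - 1)" "int (2 * p * p) = 2 * int p * int p"
      "int ((2 * p + 2) * p) = 2 * int p * int (p + 1)"
      by (simp_all add: algebra_simps of_nat_diff)
    show ?thesis
      unfolding shift_act_add shift_act_monom e periodic_add_mult[OF assms(2)] by simp
  qed
  ultimately show ?thesis by (simp add: cong_iff_dvd_diff)
qed

section \<open>The fusion matrix of X_2 modulo p\<close>

definition fusion_int_mat :: "nat \<Rightarrow> int mat" where
  "fusion_int_mat p = mat (psu_rank p) (psu_rank p)
     (\<lambda>(m, i). if i + 1 = m \<or> i = m + 1 \<or> (i = m \<and> m \<noteq> 0) then 1 else 0)"

lemma dim_fusion_int_mat [simp]: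
  "dim_row (fusion_int_mat p) = psu_rank p" "dim_col (fusion_int_mat p) = psu_rank p"
  by (simp_all add: fusion_int_mat_def)

lemma fusion_int_mat_carrier [simp]: "fusion_int_mat p \<in> carrier_mat (psu_rank p) (psu_rank p)"
  by (rule carrier_matI) simp_all

lemma dim_fusion_int_mat_pow [simp]:
  "dim_row (fusion_int_mat p ^\<^sub>m j) = psu_rank p" "dim_col (fusion_int_mat p ^\<^sub>m j) = psu_rank p"
  by simp_all

lemma psu_rank_odd_eq: "odd p \<Longrightarrow> int p = 2 * int (psu_rank p) + 1"
  by (auto simp: psu_rank_def elim!: oddE)

lemma fusion_matrix_X2_eq:
  assumes "odd p"
  shows "fusion_matrix_X2 p = map_mat real_of_int (fusion_int_mat p)"
proof (rule eq_matI)
  fix m i assume "m < dim_row (map_mat real_of_int (fusion_int_mat p))"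
    and "i < dim_col (map_mat real_of_int (fusion_int_mat p))"
  then have "m < psu_rank p" "i < psu_rank p" by auto
  then have cond: "(\<bar>2 * int 1 - 2 * int i\<bar> \<le> 2 * int m \<and>
      2 * int m \<le> min (2 * int 1 + 2 * int i) (2 * (int p - 2) - 2 * int 1 - 2 * int i))
    \<longleftrightarrow> i + 1 = m \<or> i = m + 1 \<or> (i = m \<and> m \<noteq> 0)"
    using psu_rank_odd_eq[OF assms] by (simp add: abs_if min_def) arith
  then have "psu_N p 1 i m = (if i + 1 = m \<or> i = m + 1 \<or> (i = m \<and> m \<noteq> 0) then 1 else 0)"
    unfolding psu_N_def cond by simp
  then show "fusion_matrix_X2 p $$ (m, i) = map_mat real_of_int (fusion_int_mat p) $$ (m, i)"
    using \<open>m < psu_rank p\<close> \<open>i < psu_rank p\<close>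
    by (simp add: fusion_matrix_X2_def fusion_int_mat_def)
qed (auto simp: fusion_matrix_X2_def fusion_int_mat_def)

lemma fusion_int_mat_mult_vec:
  assumes "v \<in> carrier_vec (psu_rank p)" "m < psu_rank p"
  shows "(fusion_int_mat p *\<^sub>v v) $ m =
    (if m = 0 then 0 else v $ (m - 1) + v $ m) + (if m + 1 < psu_rank p then v $ (m + 1) else 0)"
proof -
  let ?n = "psu_rank p"
  have "(fusion_int_mat p *\<^sub>v v) $ m =
      (\<Sum>i<?n. if i + 1 = m \<or> i = m + 1 \<or> (i = m \<and> m \<noteq> 0) then v $ i else 0)"
    using assms by (auto simp: fusion_int_mat_def scalar_prod_def atLeast0LessThan intro: sum.cong)
  also have "\<dots> = (\<Sum>i<?n. if i + 1 = m then v $ i else 0)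
      + (\<Sum>i<?n. if i = m + 1 then v $ i else 0)
      + (\<Sum>i<?n. if i = m \<and> m \<noteq> 0 then v $ i else 0)"
    unfolding sum.distrib[symmetric] by (rule sum.cong) auto
  also have "\<dots> = (if m = 0 then 0 else v $ (m - 1) + v $ m) + (if m + 1 < ?n then v $ (m + 1) else 0)"
    using assms(2) by (cases m) (auto simp: sum.delta)
  finally show ?thesis .
qed

definition odd_samples :: "nat \<Rightarrow> (int \<Rightarrow> 'a) \<Rightarrow> 'a vec" where
  "odd_samples n g = vec n (\<lambda>m. g (2 * int m + 1))"

lemma odd_samples_carrier [simp]: "odd_samples n g \<in> carrier_vec n"
  by (simp add: odd_samples_def)

(* The boundary rows of the fusion matrix come from g(-1) = -g(1) and g(p) = 0. *)
lemma fusion_int_mat_mult_odd_samples: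
  assumes "odd p" "periodic (2 * int p) g" "odd_fun g"
  shows "fusion_int_mat p *\<^sub>v odd_samples (psu_rank p) g
    = odd_samples (psu_rank p) (shift_act (fusion_poly p) g)"
proof (rule eq_vecI)
  let ?n = "psu_rank p"
  fix m assume "m < dim_vec (odd_samples ?n (shift_act (fusion_poly p) g))"
  then have m: "m < ?n" by (simp add: odd_samples_def)
  have "1 \<le> p" using assms(1) by (cases p) auto
  have left: "(if m = 0 then 0 else g (2 * int m - 1) + g (2 * int m + 1))
      = g (2 * int m - 1) + g (2 * int m + 1)"
  proof (cases "m = 0")
    case True
    have "g (- 1) = - g 1" using assms(3) unfolding odd_fun_def by blast
    then show ?thesis using True by simp
  qed simp
  have right: "(if m + 1 < ?n then g (2 * int m + 3) else 0) = g (2 * int m + 3)"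
  proof (cases "m + 1 < ?n")
    case False
    then have "2 * int m + 3 = int p" using m psu_rank_odd_eq[OF assms(1)] by simp
    then show ?thesis using False periodic_odd_fun_half_period_eq_0[OF assms(2,3)] by simp
  qed simp
  have "(fusion_int_mat p *\<^sub>v odd_samples ?n g) $ m
      = (if m = 0 then 0 else g (2 * int m - 1) + g (2 * int m + 1))
        + (if m + 1 < ?n then g (2 * int m + 3) else 0)"
  proof -
    have sample: "odd_samples ?n g $ i = g (2 * int i + 1)" if "i < ?n" for i
      using that by (simp add: odd_samples_def)
    show ?thesis
      unfolding fusion_int_mat_mult_vec[OF odd_samples_carrier m]
      using m by (auto simp: sample of_nat_diff add.commute)
  qed
  also have "\<dots> = shift_act (fusion_poly p) g (2 * int m + 1)"
    unfolding left right shift_act_fusion_poly[OF assms(2) \<open>1 \<le> p\<close>] by (simp add: algebra_simps)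
  finally show "(fusion_int_mat p *\<^sub>v odd_samples ?n g) $ m
      = odd_samples ?n (shift_act (fusion_poly p) g) $ m"
    using m by (simp add: odd_samples_def)
qed (simp add: odd_samples_def)

lemma fusion_int_mat_pow_mult_odd_samples:
  assumes "odd p" "periodic (2 * int p) g" "odd_fun g"
  shows "fusion_int_mat p ^\<^sub>m j *\<^sub>v odd_samples (psu_rank p) g
    = odd_samples (psu_rank p) (shift_act (fusion_poly p ^ j) g)"
  using assms(2,3)
proof (induction j arbitrary: g)
  case 0
  then show ?case by (simp add: shift_act_1)
next
  case (Suc j)
  let ?n = "psu_rank p" and ?F = "fusion_int_mat p"
  have "1 \<le> p" using assms(1) by (cases p) auto
  have "?F ^\<^sub>m Suc j *\<^sub>v odd_samples ?n g = ?F ^\<^sub>m j *\<^sub>v (?F *\<^sub>v odd_samples ?n g)"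
    using assoc_mult_mat_vec[of "?F ^\<^sub>m j" ?n ?n ?F ?n] by simp
  also have "\<dots> = ?F ^\<^sub>m j *\<^sub>v odd_samples ?n (shift_act (fusion_poly p) g)"
    using fusion_int_mat_mult_odd_samples[OF assms(1) Suc.prems] by simp
  also have "\<dots> = odd_samples ?n (shift_act (fusion_poly p ^ j) (shift_act (fusion_poly p) g))"
    using Suc.prems \<open>1 \<le> p\<close>
    by (intro Suc.IH periodic_shift_act odd_fun_shift_act_fusion_poly)
  finally show ?case by (simp only: power_Suc2 shift_act_mult)
qed

definition odd_periodic_ext :: "nat \<Rightarrow> int vec \<Rightarrow> int \<Rightarrow> int" where
  "odd_periodic_ext p v k = (let r = k mod (2 * int p) in
     if odd r \<and> r < int p then v $ nat ((r - 1) div 2)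
     else if odd r \<and> int p < r then - v $ nat ((2 * int p - r - 1) div 2)
     else 0)"

lemma periodic_odd_periodic_ext: "periodic (2 * int p) (odd_periodic_ext p v)"
  by (simp add: periodic_def odd_periodic_ext_def)

lemma odd_fun_odd_periodic_ext:
  assumes "1 \<le> p"
  shows "odd_fun (odd_periodic_ext p v)"
  unfolding odd_fun_def
proof
  fix k
  let ?q = "2 * int p"
  define r where "r = k mod ?q"
  have r: "0 \<le> r" "r < ?q" using assms unfolding r_def by auto
  show "odd_periodic_ext p v (- k) = - odd_periodic_ext p v k"
  proof (cases "r = 0")
    case True
    then have "(- k) mod ?q = 0" unfolding r_def by (simp add: zmod_zminus1_eq_if)
    then show ?thesis using True unfolding odd_periodic_ext_def r_def[symmetric] by simp
  next
    case False
    then have "(- k) mod ?q = ?q - r" unfolding r_def by (simp add: zmod_zminus1_eq_if)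
    then show ?thesis unfolding odd_periodic_ext_def Let_def r_def[symmetric] using r by auto
  qed
qed

lemma odd_samples_odd_periodic_ext:
  assumes "odd p" "v \<in> carrier_vec (psu_rank p)"
  shows "odd_samples (psu_rank p) (odd_periodic_ext p v) = v"
proof (rule eq_vecI)
  fix m assume "m < dim_vec v"
  then have m: "m < psu_rank p" using assms(2) by simp
  then have "(2 * int m + 1) mod (2 * int p) = 2 * int m + 1" using psu_rank_odd_eq[OF assms(1)] by simp
  then show "odd_samples (psu_rank p) (odd_periodic_ext p v) $ m = v $ m"
    using m psu_rank_odd_eq[OF assms(1)] by (simp add: odd_samples_def odd_periodic_ext_def)
qed (use assms(2) in \<open>simp add: odd_samples_def\<close>)

lemma cong_scalar_mat_fusion_int_mat_pow:
  assumes "prime p" "odd p"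
  shows "cong_scalar_mat (int p) (fusion_int_mat p ^\<^sub>m p) 3"
  unfolding cong_scalar_mat_def
proof (intro allI impI)
  let ?n = "psu_rank p" and ?P = "fusion_int_mat p ^\<^sub>m p"
  fix a b assume "a < dim_row ?P" "b < dim_col ?P"
  then have a: "a < ?n" and b: "b < ?n" by (simp_all only: dim_fusion_int_mat_pow)
  let ?v = "unit_vec ?n b :: int vec"
  let ?g = "odd_periodic_ext p ?v"
  have "1 \<le> p" using assms(2) by (cases p) auto
  have "?P $$ (a, b) = (?P *\<^sub>v ?v) $ a"
    using a b dim_fusion_int_mat_pow[of p p] by (simp add: scalar_prod_right_unit)
  also have "\<dots> = (?P *\<^sub>v odd_samples ?n ?g) $ a"
    using odd_samples_odd_periodic_ext[OF assms(2), of ?v] by simp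
  also have "\<dots> = shift_act (fusion_poly p ^ p) ?g (2 * int a + 1)"
    unfolding fusion_int_mat_pow_mult_odd_samples[OF assms(2) periodic_odd_periodic_ext
        odd_fun_odd_periodic_ext[OF \<open>1 \<le> p\<close>]]
    using a by (simp add: odd_samples_def)
  finally have "[?P $$ (a, b) = 3 * ?g (2 * int a + 1)] (mod int p)"
    using shift_act_fusion_poly_power_cong[OF assms(1) periodic_odd_periodic_ext] by simp
  moreover have "?g (2 * int a + 1) = ?v $ a"
    using arg_cong[OF odd_samples_odd_periodic_ext[OF assms(2), of ?v], of "\<lambda>w. w $ a"] a
    by (simp add: odd_samples_def)
  ultimately show "[?P $$ (a, b) = (if a = b then 3 else 0)] (mod int p)"
    using a b by (cases "a = b") simp_all
qed

lemma prime_not_dvd_6: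
  assumes "prime p" "odd p" "p \<noteq> 3"
  shows "\<not> int p dvd 6"
proof
  assume "int p dvd 6"
  then have "p dvd 2 * 3" by presburger
  then have "p dvd 2 \<or> p dvd 3" using assms(1) prime_dvd_mult_nat by blast
  then have "p \<le> 3" by (auto dest: dvd_imp_le)
  then show False using assms prime_ge_2_nat[OF assms(1)] by presburger
qed

lemma det_fusion_matrix_X2_nonzero:
  assumes "prime p" "odd p" "p \<noteq> 3"
  shows "det (fusion_matrix_X2 p) \<noteq> 0"
proof -
  have "\<not> int p dvd 3"
    using prime_not_dvd_6[OF assms] dvd_trans[of "int p" 3 6] by auto
  then have "det (fusion_int_mat p ^\<^sub>m p) \<noteq> 0"
    using assms(1) cong_scalar_mat_fusion_int_mat_pow[OF assms(1,2)]
    by (intro det_nonzero_if_cong_scalar_mat[of _ "psu_rank p"]) simp_all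
  then have "det (fusion_int_mat p) \<noteq> 0"
    using prime_gt_0_nat[OF assms(1)] by (simp add: det_pow_mat[OF fusion_int_mat_carrier])
  then show ?thesis by (simp add: fusion_matrix_X2_eq[OF assms(2)])
qed

section \<open>The operator X |-> X P + P X\<close>

lemma less_square_cases:
  fixes a n :: nat
  assumes "a < n * n"
  obtains i j where "a = i * n + j" "i < n" "j < n"
proof
  show "a = a div n * n + a mod n" by simp
  show "a div n < n" using assms by (simp add: less_mult_imp_div_less)
  show "a mod n < n" using assms by (cases n) auto
qed

lemma square_index_less:
  fixes i j n :: nat
  assumes "i < n" "j < n"
  shows "i * n + j < n * n"
proof -
  have "i * n + j < (i + 1) * n" using assms(2) by simp
  also have "\<dots> \<le> n * n" using assms(1) by (intro mult_le_mono1) simp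
  finally show ?thesis .
qed

definition vec_of_sq_mat :: "nat \<Rightarrow> 'a mat \<Rightarrow> 'a vec" where
  "vec_of_sq_mat n A = vec (n * n) (\<lambda>a. A $$ (a div n, a mod n))"

definition sylvester_mat :: "nat \<Rightarrow> 'a::semiring_0 mat \<Rightarrow> 'a mat" where
  "sylvester_mat n P = mat (n * n) (n * n) (\<lambda>(a, b).
     (if a div n = b div n then P $$ (b mod n, a mod n) else 0) +
     (if a mod n = b mod n then P $$ (a div n, b div n) else 0))"

lemma dim_vec_of_sq_mat [simp]: "dim_vec (vec_of_sq_mat n A) = n * n"
  by (simp add: vec_of_sq_mat_def)

lemma vec_of_sq_mat_carrier [simp]: "vec_of_sq_mat n A \<in> carrier_vec (n * n)"
  by (rule carrier_vecI) simp

lemma index_vec_of_sq_mat: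
  assumes "i < n" "j < n"
  shows "vec_of_sq_mat n A $ (i * n + j) = A $$ (i, j)"
  using square_index_less[OF assms] assms(2) by (simp add: vec_of_sq_mat_def)

lemma dim_sylvester_mat [simp]:
  "dim_row (sylvester_mat n P) = n * n" "dim_col (sylvester_mat n P) = n * n"
  by (simp_all add: sylvester_mat_def)

lemma sylvester_mat_carrier [simp]: "sylvester_mat n P \<in> carrier_mat (n * n) (n * n)"
  by (rule carrier_matI) simp_all

lemma index_sylvester_mat:
  assumes "i < n" "j < n" "k < n" "l < n"
  shows "sylvester_mat n P $$ (i * n + j, k * n + l) =
    (if i = k then P $$ (l, j) else 0) + (if j = l then P $$ (i, k) else 0)"
  using assms square_index_less[OF assms(1,2)] square_index_less[OF assms(3,4)]
  by (simp add: sylvester_mat_def)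

lemma vec_of_sq_mat_eq_0:
  assumes "A \<in> carrier_mat n n" "vec_of_sq_mat n A = 0\<^sub>v (n * n)"
  shows "A = 0\<^sub>m n n"
proof (rule eq_matI)
  fix i j assume "i < dim_row (0\<^sub>m n n :: 'a mat)" "j < dim_col (0\<^sub>m n n :: 'a mat)"
  then have i: "i < n" and j: "j < n" by auto
  then have "A $$ (i, j) = vec_of_sq_mat n A $ (i * n + j)" by (simp add: index_vec_of_sq_mat)
  then show "A $$ (i, j) = 0\<^sub>m n n $$ (i, j)"
    using assms(2) square_index_less[OF i j] i j by simp
qed (use assms(1) in auto)

lemma vec_of_sq_mat_zero [simp]: "vec_of_sq_mat n (0\<^sub>m n n) = 0\<^sub>v (n * n)"
proof (rule eq_vecI)
  fix a assume "a < dim_vec (0\<^sub>v (n * n) :: 'a vec)"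
  then obtain i j where "a = i * n + j" "i < n" "j < n" by (auto elim: less_square_cases)
  then show "vec_of_sq_mat n (0\<^sub>m n n) $ a = 0\<^sub>v (n * n) $ a"
    by (simp add: index_vec_of_sq_mat square_index_less)
qed simp

lemma sum_lessThan_mult:
  fixes f :: "nat \<Rightarrow> 'a::comm_monoid_add"
  shows "(\<Sum>b<m * n. f b) = (\<Sum>i<m. \<Sum>j<n. f (i * n + j))"
proof -
  have "sum f {i * n..<i * n + n} = (\<Sum>j<n. f (i * n + j))" for i
    using sum.shift_bounds_nat_ivl[of f 0 "i * n" n] by (simp add: atLeast0LessThan add.commute)
  then show ?thesis using sum.nat_group[of f n m] by simp
qed

lemma sylvester_mat_mult_vec:
  fixes A P :: "'a::comm_semiring_1 mat"
  assumes A: "A \<in> carrier_mat n n" and P: "P \<in> carrier_mat n n"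
  shows "sylvester_mat n P *\<^sub>v vec_of_sq_mat n A = vec_of_sq_mat n (A * P + P * A)"
proof (rule eq_vecI)
  fix a assume "a < dim_vec (vec_of_sq_mat n (A * P + P * A))"
  then obtain i j where a: "a = i * n + j" and ij: "i < n" "j < n"
    by (auto simp: vec_of_sq_mat_def elim: less_square_cases)
  have "(sylvester_mat n P *\<^sub>v vec_of_sq_mat n A) $ a
      = (\<Sum>b<n * n. sylvester_mat n P $$ (a, b) * vec_of_sq_mat n A $ b)"
    using a ij square_index_less[OF ij] by (auto simp: scalar_prod_def atLeast0LessThan intro!: sum.cong)
  also have "\<dots> = (\<Sum>k<n. \<Sum>l<n.
      ((if i = k then P $$ (l, j) else 0) + (if j = l then P $$ (i, k) else 0)) * A $$ (k, l))"
    unfolding sum_lessThan_mult a using ij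
    by (intro sum.cong refl) (simp add: index_sylvester_mat index_vec_of_sq_mat)
  also have "\<dots> = (\<Sum>k<n. \<Sum>l<n. if k = i then A $$ (k, l) * P $$ (l, j) else 0)
      + (\<Sum>k<n. \<Sum>l<n. if l = j then P $$ (i, k) * A $$ (k, l) else 0)"
    unfolding sum.distrib[symmetric] by (intro sum.cong refl) (auto simp: algebra_simps)
  also have "\<dots> = (\<Sum>l<n. A $$ (i, l) * P $$ (l, j)) + (\<Sum>k<n. P $$ (i, k) * A $$ (k, j))"
    using ij by (simp add: sum.delta sum.swap[where A = "{..<n}" and B = "{..<n}" and
          g = "\<lambda>k l. if k = i then A $$ (k, l) * P $$ (l, j) else 0"])
  also have "\<dots> = (A * P + P * A) $$ (i, j)"
    using ij A P by (simp add: scalar_prod_def atLeast0LessThan)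
  finally show "(sylvester_mat n P *\<^sub>v vec_of_sq_mat n A) $ a = vec_of_sq_mat n (A * P + P * A) $ a"
    using a ij by (simp add: index_vec_of_sq_mat)
qed simp

lemma map_mat_of_int_sylvester_mat:
  assumes "P \<in> carrier_mat n n"
  shows "map_mat (of_int :: int \<Rightarrow> 'a::ring_1) (sylvester_mat n P)
    = sylvester_mat n (map_mat of_int P)"
proof (rule eq_matI)
  fix a b assume "a < dim_row (sylvester_mat n (map_mat (of_int :: int \<Rightarrow> 'a) P))"
    "b < dim_col (sylvester_mat n (map_mat (of_int :: int \<Rightarrow> 'a) P))"
  then have "a < n * n" "b < n * n" by simp_all
  then obtain i j k l where "a = i * n + j" "b = k * n + l" "i < n" "j < n" "k < n" "l < n"
    by (metis less_square_cases)
  then show "map_mat of_int (sylvester_mat n P) $$ (a, b) = sylvester_mat n (map_mat of_int P) $$ (a, b)"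
    using assms by (simp add: index_sylvester_mat square_index_less)
qed simp_all

lemma cong_scalar_mat_sylvester_mat:
  assumes "P \<in> carrier_mat n n" "cong_scalar_mat q P d"
  shows "cong_scalar_mat q (sylvester_mat n P) (2 * d)"
  unfolding cong_scalar_mat_def
proof (intro allI impI)
  fix a b assume "a < dim_row (sylvester_mat n P)" "b < dim_col (sylvester_mat n P)"
  then have "a < n * n" "b < n * n" by simp_all
  then obtain i j k l where ab: "a = i * n + j" "b = k * n + l" and ijkl: "i < n" "j < n" "k < n" "l < n"
    by (metis less_square_cases)
  have P: "[P $$ (x, y) = (if x = y then d else 0)] (mod q)" if "x < n" "y < n" for x y
    using assms that by (auto simp: cong_scalar_mat_def)
  have "[(if i = k then P $$ (l, j) else 0) = (if i = k \<and> j = l then d else 0)] (mod q)"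
    using P[of l j] ijkl by auto
  moreover have "[(if j = l then P $$ (i, k) else 0) = (if i = k \<and> j = l then d else 0)] (mod q)"
    using P[of i k] ijkl by auto
  ultimately have "[sylvester_mat n P $$ (a, b)
      = (if i = k \<and> j = l then d else 0) + (if i = k \<and> j = l then d else 0)] (mod q)"
    unfolding ab index_sylvester_mat[OF ijkl] by (rule cong_add)
  moreover have "a = b \<longleftrightarrow> i = k \<and> j = l"
  proof
    assume "a = b"
    then have "a div n = b div n" "a mod n = b mod n" by simp_all
    then show "i = k \<and> j = l" using ab ijkl by simp
  qed (use ab in simp)
  ultimately show "[sylvester_mat n P $$ (a, b) = (if a = b then 2 * d else 0)] (mod q)"
    by (cases "i = k \<and> j = l") simp_all
qed

lemma of_int_mat_mult_vec_eq_0: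
  fixes M :: "int mat" and v :: "real vec"
  assumes "M \<in> carrier_mat n n" "det M \<noteq> 0" "v \<in> carrier_vec n"
    and "map_mat real_of_int M *\<^sub>v v = 0\<^sub>v n"
  shows "v = 0\<^sub>v n"
  using det_0_iff_vec_prod_zero[of "map_mat real_of_int M" n] assms by auto

lemma smult_neg_one_add_mat:
  assumes "M \<in> carrier_mat nr nc"
  shows "(-1 :: 'a::ring_1) \<cdot>\<^sub>m M + M = 0\<^sub>m nr nc"
  by (rule eq_matI) (use assms in auto)

lemma anticommuting_mat_eq_0:
  fixes A :: "real mat" and P :: "int mat"
  assumes "prime q" "\<not> q dvd 2 * d" and P: "P \<in> carrier_mat n n" "cong_scalar_mat q P d"
    and A: "A \<in> carrier_mat n n"
    and anti: "A * map_mat real_of_int P = (-1) \<cdot>\<^sub>m (map_mat real_of_int P * A)"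
  shows "A = 0\<^sub>m n n"
proof -
  let ?P = "map_mat real_of_int P" and ?S = "sylvester_mat n P"
  have P': "?P \<in> carrier_mat n n" using P(1) by simp
  have "det ?S \<noteq> 0"
    using cong_scalar_mat_sylvester_mat[OF P] assms(1,2)
    by (rule det_nonzero_if_cong_scalar_mat[OF sylvester_mat_carrier])
  moreover have "A * ?P + ?P * A = 0\<^sub>m n n"
    unfolding anti using P' A by (simp add: smult_neg_one_add_mat)
  then have "map_mat real_of_int ?S *\<^sub>v vec_of_sq_mat n A = 0\<^sub>v (n * n)"
    unfolding map_mat_of_int_sylvester_mat[OF P(1)] sylvester_mat_mult_vec[OF A P'] by simp
  ultimately have "vec_of_sq_mat n A = 0\<^sub>v (n * n)"
    using of_int_mat_mult_vec_eq_0[OF sylvester_mat_carrier _ vec_of_sq_mat_carrier] by blast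
  then show ?thesis by (rule vec_of_sq_mat_eq_0[OF A])
qed

section \<open>Conjugation by the fusion matrix\<close>

lemma sq_mat_inv_eqI:
  assumes F: "F \<in> carrier_mat n n" and B: "B \<in> carrier_mat n n"
    and BF: "B * F = 1\<^sub>m n" and FB: "F * B = 1\<^sub>m n"
  shows "sq_mat_inv F = B"
  unfolding sq_mat_inv_def
proof (rule the_equality)
  fix B' assume "B' \<in> carrier_mat (dim_row F) (dim_row F) \<and> inverts_mat F B' \<and> inverts_mat B' F"
  then have B': "B' \<in> carrier_mat n n" and B'F: "B' * F = 1\<^sub>m n"
    using F by (auto simp: inverts_mat_def)
  have "B' = B' * (F * B)" using FB B' by simp
  also have "\<dots> = (B' * F) * B" using assoc_mult_mat[OF B' F B] by simp
  finally show "B' = B" using B'F B by simp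
qed (use F B BF FB in \<open>auto simp: inverts_mat_def\<close>)

lemma skew_commute_of_sq_mat_inv_conj:
  assumes F: "F \<in> carrier_mat n n" and "det F \<noteq> 0" and A: "A \<in> carrier_mat n n"
    and conj: "sq_mat_inv F * A * F = c \<cdot>\<^sub>m A"
  shows "A * F = c \<cdot>\<^sub>m (F * A)"
proof -
  obtain B where B: "B \<in> carrier_mat n n" and BF: "B * F = 1\<^sub>m n" and FB: "F * B = 1\<^sub>m n"
    using det_non_zero_imp_unit[OF F assms(2)] by (auto simp: Units_def ring_mat_simps)
  have "A * F = ((F * B) * A) * F" using A FB by simp
  also have "\<dots> = F * (B * A * F)"
    using assoc_mult_mat[OF F B A] assoc_mult_mat[OF F mult_carrier_mat[OF B A] F] by simp
  also have "B * A * F = c \<cdot>\<^sub>m A" using conj sq_mat_inv_eqI[OF F B BF FB] by simp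
  also have "F * (c \<cdot>\<^sub>m A) = c \<cdot>\<^sub>m (F * A)" by (rule mult_smult_distrib[OF F A])
  finally show ?thesis .
qed

lemma smult_smult_mat: "a \<cdot>\<^sub>m (b \<cdot>\<^sub>m A) = (a * b :: 'a::semigroup_mult) \<cdot>\<^sub>m A"
  by (rule eq_matI) (auto simp: mult.assoc)

lemma skew_commute_pow_mat:
  fixes A F :: "'a::comm_ring_1 mat"
  assumes A: "A \<in> carrier_mat n n" and F: "F \<in> carrier_mat n n"
    and AF: "A * F = c \<cdot>\<^sub>m (F * A)"
  shows "A * F ^\<^sub>m j = c ^ j \<cdot>\<^sub>m (F ^\<^sub>m j * A)"
proof (induction j)
  case 0
  show ?case using A F by (intro eq_matI) auto
next
  case (Suc j)
  have Fj: "F ^\<^sub>m j \<in> carrier_mat n n" using F by simp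
  have "A * F ^\<^sub>m Suc j = (A * F ^\<^sub>m j) * F" using assoc_mult_mat[OF A Fj F] by simp
  also have "\<dots> = c ^ j \<cdot>\<^sub>m ((F ^\<^sub>m j * A) * F)"
    unfolding Suc by (rule mult_smult_assoc_mat[OF mult_carrier_mat[OF Fj A] F])
  also have "(F ^\<^sub>m j * A) * F = F ^\<^sub>m j * (A * F)" using assoc_mult_mat[OF Fj A F] .
  also have "\<dots> = c \<cdot>\<^sub>m (F ^\<^sub>m Suc j * A)"
    unfolding AF using assoc_mult_mat[OF Fj F A] mult_smult_distrib[OF Fj mult_carrier_mat[OF F A]] by simp
  finally show ?case by (simp add: smult_smult_mat mult.commute)
qed

lemma fusion_matrix_X2_3: "fusion_matrix_X2 3 = 0\<^sub>m 1 1"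
  by (rule eq_matI) (auto simp: fusion_matrix_X2_def psu_rank_def psu_N_def)

(* For p = 3 the fusion matrix is [0], so sq_mat_inv picks an arbitrary matrix of unknown size;
   only the zero right factor matters. *)
lemma T_X2_3_eq_neg_imp_zero:
  assumes A: "A \<in> carrier_mat 1 1" and TA: "T_X2 3 A = (-1) \<cdot>\<^sub>m A"
  shows "A = 0\<^sub>m 1 1"
proof -
  have "A = (-1) \<cdot>\<^sub>m ((-1) \<cdot>\<^sub>m A)" by (rule eq_matI) auto
  also have "(-1) \<cdot>\<^sub>m A = 0\<^sub>m (dim_row (sq_mat_inv (fusion_matrix_X2 3))) 1"
    unfolding TA[symmetric]
    by (rule eq_matI) (auto simp: T_X2_def fusion_matrix_X2_3 scalar_prod_def)
  finally show ?thesis using A by auto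
qed

lemma T_X2_eq_neg_imp_zero:
  assumes p: "prime p" "odd p" "p \<noteq> 3"
    and A: "A \<in> carrier_mat (psu_rank p) (psu_rank p)" and TA: "T_X2 p A = (-1) \<cdot>\<^sub>m A"
  shows "A = 0\<^sub>m (psu_rank p) (psu_rank p)"
proof -
  let ?F = "fusion_matrix_X2 p" and ?P = "fusion_int_mat p ^\<^sub>m p"
  have F: "?F \<in> carrier_mat (psu_rank p) (psu_rank p)" by (simp add: fusion_matrix_X2_def)
  have "A * ?F = (-1) \<cdot>\<^sub>m (?F * A)"
    using TA unfolding T_X2_def
    by (rule skew_commute_of_sq_mat_inv_conj[OF F det_fusion_matrix_X2_nonzero[OF p] A])
  then have "A * map_mat real_of_int ?P = (-1) \<cdot>\<^sub>m (map_mat real_of_int ?P * A)"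
    using skew_commute_pow_mat[OF A F, of "-1" p] p(2)
    by (simp add: fusion_matrix_X2_eq[OF p(2)] of_int_hom.mat_hom_pow[OF fusion_int_mat_carrier])
  then show ?thesis
    using p(1) prime_not_dvd_6[OF p]
    by (intro anticommuting_mat_eq_0[OF _ _ _ cong_scalar_mat_fusion_int_mat_pow[OF p(1,2)] A]) simp_all
qed

theorem mainTheorem19:
  fixes p :: nat
  assumes "prime p" and "odd p"
  shows "\<not> (\<exists>A \<in> carrier_mat (psu_rank p) (psu_rank p).
              A \<noteq> 0\<^sub>m (psu_rank p) (psu_rank p) \<and> T_X2 p A = (-1) \<cdot>\<^sub>m A)"
proof
  assume "\<exists>A \<in> carrier_mat (psu_rank p) (psu_rank p).
              A \<noteq> 0\<^sub>m (psu_rank p) (psu_rank p) \<and> T_X2 p A = (-1) \<cdot>\<^sub>m A"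
  then obtain A where A: "A \<in> carrier_mat (psu_rank p) (psu_rank p)"
    and nonzero: "A \<noteq> 0\<^sub>m (psu_rank p) (psu_rank p)" and TA: "T_X2 p A = (-1) \<cdot>\<^sub>m A"
    by blast
  have "A = 0\<^sub>m (psu_rank p) (psu_rank p)"
  proof (cases "p = 3")
    case True
    then show ?thesis using T_X2_3_eq_neg_imp_zero A TA by (simp add: psu_rank_def)
  next
    case False
    show ?thesis by (rule T_X2_eq_neg_imp_zero[OF assms False A TA])
  qed
  with nonzero show False ..
qed

end
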